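(* Let $d\ge 3$, let $K$ be an algebraically closed field of characteristic $p$ with $p=0$ or $p>d$, let $X_d\subset\mathbb{P}^3(K)$ be a smooth surface of degree $d$, let $L\subset X_d$ be a line, and let $P\in L$ be a point such that the Hessian quadric $V_P$ does not contain the tangent plane $\mathbb{T}_PX_d$. If $L$ is a line of the second kind, then the form $\mathfrak t_P^{(3)}$ vanishes identically on the set-theoretic intersection $\mathbb{T}_PX_d\cap V_P$.
   Context: Let $f$ be a homogeneous defining polynomial of $X_d$. For $P=(p_0:\dots:p_3)$ and $j=1,2,3$ put $\mathfrak t_P^{(j)}(z):=\sum_{0\le i_1,\dots,i_j\le 3}\frac{\partial^j f}{\partial w_{i_1}\cdots\partial w_{i_j}}(p_0,\dots,p_3)\,z_{i_1}\cdots z_{i_j}$. Then $\mathbb{T}_PX_d=V(\mathfrak t_P^{(1)})$ is the projective tangent plane of $X_d$ at $P$ and $V_P=V(\mathfrak t_P^{(2)})$ is the Hessian quadric at $P$. A line $L\subset X_d$ is called a line of the second kind if it meets every plane curve $\Gamma\in|\mathcal O_{X_d}(1)-L|$ (i.e. every curve residual to $L$ in the intersection of $X_d$ with a plane containing $L$) only in inflection points of $\Gamma$; otherwise it is of the first kind. *)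

theory Defs
  imports "HOL-Computational_Algebra.Polynomial"
begin

text \<open>Homogeneous forms of degree d in n variables x_0..x_(n-1), represented by their
coefficient function on exponent vectors (only exponent vectors in mons n d matter).
Points / vectors of K^n are functions nat => K (only indices < n matter).\<close>

definition mons :: "nat \<Rightarrow> nat \<Rightarrow> (nat \<Rightarrow> nat) set" where
  "mons n d = {\<alpha>. (\<forall>i\<ge>n. \<alpha> i = 0) \<and> (\<Sum>i<n. \<alpha> i) = d}"

definition evalf :: "nat \<Rightarrow> nat \<Rightarrow> ((nat \<Rightarrow> nat) \<Rightarrow> 'a::comm_ring_1) \<Rightarrow> (nat \<Rightarrow> 'a) \<Rightarrow> 'a" where
  "evalf n d c x = (\<Sum>\<alpha>\<in>mons n d. c \<alpha> * (\<Prod>i<n. x i ^ \<alpha> i))"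

definition pdf :: "nat \<Rightarrow> ((nat \<Rightarrow> nat) \<Rightarrow> 'a::comm_ring_1) \<Rightarrow> ((nat \<Rightarrow> nat) \<Rightarrow> 'a)" where
  "pdf i c = (\<lambda>\<alpha>. of_nat (\<alpha> i + 1) * c (\<alpha>(i := \<alpha> i + 1)))"

definition pdfs :: "nat list \<Rightarrow> ((nat \<Rightarrow> nat) \<Rightarrow> 'a::comm_ring_1) \<Rightarrow> ((nat \<Rightarrow> nat) \<Rightarrow> 'a)" where
  "pdfs is c = foldr pdf is c"

definition tform :: "nat \<Rightarrow> nat \<Rightarrow> nat \<Rightarrow> ((nat \<Rightarrow> nat) \<Rightarrow> 'a::comm_ring_1) \<Rightarrow> (nat \<Rightarrow> 'a) \<Rightarrow> (nat \<Rightarrow> 'a) \<Rightarrow> 'a" where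
  "tform n d j c P z = (\<Sum>is\<in>{is. length is = j \<and> set is \<subseteq> {..<n}}.
      evalf n (d - j) (pdfs is c) P * prod_list (map z is))"

definition nonzero_vec :: "nat \<Rightarrow> (nat \<Rightarrow> 'a::zero) \<Rightarrow> bool" where
  "nonzero_vec n x \<longleftrightarrow> (\<exists>i<n. x i \<noteq> 0)"

definition indep2 :: "nat \<Rightarrow> (nat \<Rightarrow> 'a::field) \<Rightarrow> (nat \<Rightarrow> 'a) \<Rightarrow> bool" where
  "indep2 n A B \<longleftrightarrow> (\<forall>a b. (\<forall>i<n. a * A i + b * B i = 0) \<longrightarrow> a = 0 \<and> b = 0)"

definition indep3 :: "nat \<Rightarrow> (nat \<Rightarrow> 'a::field) \<Rightarrow> (nat \<Rightarrow> 'a) \<Rightarrow> (nat \<Rightarrow> 'a) \<Rightarrow> bool" where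
  "indep3 n A B C \<longleftrightarrow>
     (\<forall>a b e. (\<forall>i<n. a * A i + b * B i + e * C i = 0) \<longrightarrow> a = 0 \<and> b = 0 \<and> e = 0)"

definition smooth_surface :: "nat \<Rightarrow> ((nat \<Rightarrow> nat) \<Rightarrow> 'a::field) \<Rightarrow> bool" where
  "smooth_surface d c \<longleftrightarrow> (\<exists>\<alpha>\<in>mons 4 d. c \<alpha> \<noteq> 0) \<and>
     (\<forall>x. nonzero_vec 4 x \<and> evalf 4 d c x = 0 \<longrightarrow> (\<exists>i<4. evalf 4 (d - 1) (pdf i c) x \<noteq> 0))"

definition line_on :: "nat \<Rightarrow> ((nat \<Rightarrow> nat) \<Rightarrow> 'a::field) \<Rightarrow> (nat \<Rightarrow> 'a) \<Rightarrow> (nat \<Rightarrow> 'a) \<Rightarrow> bool" where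
  "line_on d c A B \<longleftrightarrow> indep2 4 A B \<and> (\<forall>s t. evalf 4 d c (\<lambda>i. s * A i + t * B i) = 0)"

text \<open>Inflection point Q of the plane curve V(h), h a ternary form of degree e:
  Q lies on the curve and some line through Q (spanned by Q and v) meets the curve
  at Q with multiplicity at least 3, i.e. h(Q + t v) vanishes to order >= 3 at t = 0
  (in characteristic not 2 this is t^(1)_Q(v) = t^(2)_Q(v) = 0).  This covers smooth
  flexes as well as singular points (equivalently: points on the Hessian curve).\<close>
definition inflection_pt :: "nat \<Rightarrow> ((nat \<Rightarrow> nat) \<Rightarrow> 'a::field) \<Rightarrow> (nat \<Rightarrow> 'a) \<Rightarrow> bool" where
  "inflection_pt e h Q \<longleftrightarrow> evalf 3 e h Q = 0 \<and>
     (\<exists>v. indep2 3 Q v \<and> tform 3 e 1 h Q v = 0 \<and> tform 3 e 2 h Q v = 0)"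

text \<open>Line of the second kind: for every plane Pi = span(A,B,C) containing L = span(A,B),
  writing f restricted to Pi in coordinates (x0,x1,x2) as x2 * h with h of degree d-1
  (so that Gamma = V(h) is the residual curve), every point of L (x2 = 0) on Gamma is an
  inflection point of Gamma.\<close>
definition second_kind :: "nat \<Rightarrow> ((nat \<Rightarrow> nat) \<Rightarrow> 'a::field) \<Rightarrow> (nat \<Rightarrow> 'a) \<Rightarrow> (nat \<Rightarrow> 'a) \<Rightarrow> bool" where
  "second_kind d c A B \<longleftrightarrow>
     (\<forall>C h. indep3 4 A B C \<longrightarrow>
        (\<forall>x. evalf 4 d c (\<lambda>i. x 0 * A i + x 1 * B i + x 2 * C i) = x 2 * evalf 3 (d - 1) h x) \<longrightarrow>
        (\<forall>Q. nonzero_vec 3 Q \<and> Q 2 = 0 \<and> evalf 3 (d - 1) h Q = 0 \<longrightarrow> inflection_pt (d - 1) h Q))"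

end

theory Submission
  imports Defs "HOL-Library.FuncSet"
begin

text \<open>
  Pick C in the tangent plane with t_P^(2)(C) \<noteq> 0. The plane \<Pi> spanned by L and C cuts X_d in
  L plus a residual curve \<Gamma> = V(h), i.e. f restricted to \<Pi> is x_2 h, and comparing Taylor
  expansions gives t_P^(j+1)(x) = (j+1) x_2 t_Q^(j)(x) on \<Pi>, where Q is P in plane coordinates
  and t_Q refers to h. Hence Q is a smooth point of \<Gamma>, and since L is of the second kind it is
  a flex: some tangent direction v meets \<Gamma> at Q with multiplicity 3, so f vanishes to order 4 at
  P along v, and t_P^(3) vanishes on the pencil spanned by P and v. As X_d is smooth at P, its
  tangent plane is \<Pi>; a point z of it off L with t_P^(2)(z) = 0 has t_Q^(1)(z) = 0, so it lies on
  the tangent line of \<Gamma> at Q, which is that pencil.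
\<close>

section \<open>Monomials and evaluation of forms\<close>

lemma finite_mons: "finite (mons n d)"
proof -
  have "mons n d \<subseteq> (\<lambda>f i. if i < n then f i else 0) ` (PiE {..<n} (\<lambda>_. {..d}))"
  proof
    fix \<alpha> assume a: "\<alpha> \<in> mons n d"
    hence s: "(\<Sum>i<n. \<alpha> i) = d" and z: "\<forall>i\<ge>n. \<alpha> i = 0" by (auto simp: mons_def)
    have "\<alpha> i \<le> d" if "i < n" for i
      using member_le_sum[of i "{..<n}" \<alpha>] that s by auto
    hence "restrict \<alpha> {..<n} \<in> PiE {..<n} (\<lambda>_. {..d})" by auto
    moreover have "\<alpha> = (\<lambda>i. if i < n then restrict \<alpha> {..<n} i else 0)"
      using z by (auto simp: fun_eq_iff)
    ultimately show "\<alpha> \<in> (\<lambda>f i. if i < n then f i else 0) ` (PiE {..<n} (\<lambda>_. {..d}))" by blast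
  qed
  moreover have "finite (PiE {..<n} (\<lambda>_. {..d::nat}))" by (rule finite_PiE) auto
  ultimately show ?thesis using finite_subset by blast
qed

lemma evalf_cong: "(\<And>i. i < n \<Longrightarrow> x i = y i) \<Longrightarrow> evalf n d c x = evalf n d c y"
  unfolding evalf_def by (intro sum.cong refl arg_cong2[where f="(*)"] prod.cong) auto

lemma evalf_homog: "evalf n d c (\<lambda>i. a * x i) = a ^ d * evalf n d c x"
proof -
  have "c \<alpha> * (\<Prod>i<n. (a * x i) ^ \<alpha> i) = a ^ d * (c \<alpha> * (\<Prod>i<n. x i ^ \<alpha> i))"
    if "\<alpha> \<in> mons n d" for \<alpha>
  proof -
    have "(\<Prod>i<n. (a * x i) ^ \<alpha> i) = (\<Prod>i<n. a ^ \<alpha> i) * (\<Prod>i<n. x i ^ \<alpha> i)"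
      by (simp add: power_mult_distrib prod.distrib)
    also have "(\<Prod>i<n. a ^ \<alpha> i) = a ^ d" using that by (simp add: mons_def power_sum[symmetric])
    finally show ?thesis by simp
  qed
  thus ?thesis unfolding evalf_def by (simp add: sum_distrib_left)
qed

lemma bij_betw_incr_mons:
  assumes "k < n"
  shows "bij_betw (\<lambda>\<beta>. \<beta>(k := \<beta> k + 1)) (mons n e) {\<alpha> \<in> mons n (Suc e). \<alpha> k \<noteq> 0}"
proof -
  have sum_upd: "(\<Sum>i<n. (\<beta>(k := v)) i) + \<beta> k = (\<Sum>i<n. \<beta> i) + v" for \<beta> :: "nat \<Rightarrow> nat" and v
    using assms by (simp add: sum.remove[of "{..<n}" k])
  have "\<beta>(k := \<beta> k + 1) \<in> mons n (Suc e)" if "\<beta> \<in> mons n e" for \<beta>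
    using that assms sum_upd[of \<beta> "\<beta> k + 1"] by (auto simp: mons_def)
  moreover have "\<alpha> \<in> (\<lambda>\<beta>. \<beta>(k := \<beta> k + 1)) ` mons n e"
    if "\<alpha> \<in> mons n (Suc e)" "\<alpha> k \<noteq> 0" for \<alpha>
  proof
    show "\<alpha> = (\<alpha>(k := \<alpha> k - 1))(k := (\<alpha>(k := \<alpha> k - 1)) k + 1)" using that by auto
    show "\<alpha>(k := \<alpha> k - 1) \<in> mons n e"
      using that assms sum_upd[of \<alpha> "\<alpha> k - 1"] by (auto simp: mons_def)
  qed
  moreover have "inj_on (\<lambda>\<beta>. \<beta>(k := \<beta> k + 1)) (mons n e)"
    by (rule inj_onI) (metis add_right_cancel fun_upd_apply fun_upd_triv fun_upd_upd)
  ultimately show ?thesis unfolding bij_betw_def by auto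
qed

lemma evalf_split_var:
  fixes c :: "(nat \<Rightarrow> nat) \<Rightarrow> 'a::comm_ring_1"
  assumes k: "k < n"
  shows "evalf n (Suc e) c x =
    evalf n (Suc e) c (x(k := 0)) + x k * evalf n e (\<lambda>\<beta>. c (\<beta>(k := \<beta> k + 1))) x"
proof -
  define T where
    "T y = (\<Sum>\<alpha>\<in>mons n (Suc e). if \<alpha> k = 0 then c \<alpha> * (\<Prod>i<n. y i ^ \<alpha> i) else 0)"
    for y :: "nat \<Rightarrow> 'a"
  have split: "evalf n (Suc e) c y = T y + y k * evalf n e (\<lambda>\<beta>. c (\<beta>(k := \<beta> k + 1))) y" for y
  proof -
    have "evalf n (Suc e) c y =
        T y + (\<Sum>\<alpha>\<in>mons n (Suc e). if \<alpha> k \<noteq> 0 then c \<alpha> * (\<Prod>i<n. y i ^ \<alpha> i) else 0)"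
      unfolding evalf_def T_def by (simp add: sum.distrib[symmetric] if_distrib cong: if_cong)
    also have "(\<Sum>\<alpha>\<in>mons n (Suc e). if \<alpha> k \<noteq> 0 then c \<alpha> * (\<Prod>i<n. y i ^ \<alpha> i) else 0) =
        (\<Sum>\<alpha>\<in>{\<alpha>\<in>mons n (Suc e). \<alpha> k \<noteq> 0}. c \<alpha> * (\<Prod>i<n. y i ^ \<alpha> i))"
      by (simp add: sum.inter_filter finite_mons)
    also have "(\<Sum>\<alpha>\<in>{\<alpha>\<in>mons n (Suc e). \<alpha> k \<noteq> 0}. c \<alpha> * (\<Prod>i<n. y i ^ \<alpha> i)) =
        (\<Sum>\<beta>\<in>mons n e. c (\<beta>(k := \<beta> k + 1)) * (\<Prod>i<n. y i ^ (\<beta>(k := \<beta> k + 1)) i))"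
      by (rule sum.reindex_bij_betw[OF bij_betw_incr_mons[OF k], symmetric])
    also have "\<dots> = y k * evalf n e (\<lambda>\<beta>. c (\<beta>(k := \<beta> k + 1))) y"
      unfolding evalf_def sum_distrib_left
    proof (intro sum.cong refl)
      fix \<beta> :: "nat \<Rightarrow> nat"
      have "(\<Prod>i<n. y i ^ (\<beta>(k := \<beta> k + 1)) i) = y k ^ (\<beta> k + 1) * (\<Prod>i\<in>{..<n}-{k}. y i ^ \<beta> i)"
        using k by (subst prod.remove[of _ k]) (auto intro!: prod.cong)
      moreover have "(\<Prod>i<n. y i ^ \<beta> i) = y k ^ \<beta> k * (\<Prod>i\<in>{..<n}-{k}. y i ^ \<beta> i)"
        using k by (subst prod.remove[of _ k]) auto
      ultimately show "c (\<beta>(k := \<beta> k + 1)) * (\<Prod>i<n. y i ^ (\<beta>(k := \<beta> k + 1)) i) =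
          y k * (c (\<beta>(k := \<beta> k + 1)) * (\<Prod>i<n. y i ^ \<beta> i))"
        by (simp add: mult_ac)
    qed
    finally show ?thesis .
  qed
  have "T (x(k := 0)) = T x"
    unfolding T_def by (intro sum.cong refl if_cong arg_cong2[where f = "(*)"] prod.cong) auto
  with split[of x] split[of "x(k := 0)"] show ?thesis by simp
qed

lemma tform_zero: "tform n d 0 c P z = evalf n d c P"
proof -
  have "{is. length is = 0 \<and> set is \<subseteq> {..<n}} = {[]}" by auto
  thus ?thesis by (simp add: tform_def pdfs_def)
qed

lemma tform_one: "tform n d 1 c P z = (\<Sum>i<n. evalf n (d - 1) (pdf i c) P * z i)"
proof -
  have lists: "{is. length is = 1 \<and> set is \<subseteq> {..<n}} = (\<lambda>i. [i]) ` {..<n}"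
    by (auto simp: length_Suc_conv)
  show ?thesis unfolding tform_def lists by (subst sum.reindex) (auto simp: inj_on_def pdfs_def)
qed

lemma tform_cong: "(\<And>i. i < n \<Longrightarrow> z i = z' i) \<Longrightarrow> tform n d j c P z = tform n d j c P z'"
  unfolding tform_def
  by (intro sum.cong refl arg_cong2[where f = "(*)"] arg_cong[where f = prod_list] map_cong) auto

section \<open>Taylor expansion along a line\<close>

lemma pderiv_sum: "pderiv (sum f A) = (\<Sum>x\<in>A. pderiv (f x))"
  using higher_pderiv_sum[of 1 f A] by simp

lemma smult_sum_right: "smult a (sum f A) = (\<Sum>i\<in>A. smult a (f i))"
  by (induction A rule: infinite_finite_induct) (auto simp: smult_add_right)

lemma poly_evalf: "poly (evalf n d (\<lambda>\<alpha>. [:c \<alpha>:]) x) s = evalf n d c (\<lambda>i. poly (x i) s)"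
  by (simp add: evalf_def poly_sum poly_prod)

lemma pderiv_evalf:
  fixes c :: "(nat \<Rightarrow> nat) \<Rightarrow> 'a::field" and x :: "nat \<Rightarrow> 'a poly"
  shows "pderiv (evalf n (Suc e) (\<lambda>\<alpha>. [:c \<alpha>:]) x) =
     (\<Sum>i<n. pderiv (x i) * evalf n e (\<lambda>\<alpha>. [:pdf i c \<alpha>:]) x)"
proof -
  define f where
    "f i \<alpha> = of_nat (\<alpha> i) * [:c \<alpha>:] * x i ^ (\<alpha> i - 1) * (\<Prod>j\<in>{..<n}-{i}. x j ^ \<alpha> j)" for i \<alpha>
  have pderiv_monomial:
    "pderiv ([:c \<alpha>:] * (\<Prod>i<n. x i ^ \<alpha> i)) = (\<Sum>i<n. pderiv (x i) * f i \<alpha>)" for \<alpha>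
    by (simp add: pderiv_smult pderiv_mult pderiv_prod pderiv_power f_def sum_distrib_left
        smult_sum_right of_nat_mult_conv_smult[symmetric] mult_ac)
  have sum_f: "(\<Sum>\<alpha>\<in>mons n (Suc e). f i \<alpha>) = evalf n e (\<lambda>\<alpha>. [:pdf i c \<alpha>:]) x" if i: "i < n" for i
  proof -
    have "(\<Sum>\<alpha>\<in>mons n (Suc e). f i \<alpha>) = (\<Sum>\<alpha>\<in>{\<alpha> \<in> mons n (Suc e). \<alpha> i \<noteq> 0}. f i \<alpha>)"
      by (rule sum.mono_neutral_right) (auto simp: finite_mons f_def)
    also have "\<dots> = (\<Sum>\<beta>\<in>mons n e. f i (\<beta>(i := \<beta> i + 1)))"
      by (rule sum.reindex_bij_betw[OF bij_betw_incr_mons[OF i], symmetric])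
    also have "\<dots> = evalf n e (\<lambda>\<alpha>. [:pdf i c \<alpha>:]) x"
      unfolding evalf_def
    proof (intro sum.cong refl)
      fix \<beta> assume "\<beta> \<in> mons n e"
      have "(\<Prod>j\<in>{..<n}-{i}. x j ^ (\<beta>(i := \<beta> i + 1)) j) = (\<Prod>j\<in>{..<n}-{i}. x j ^ \<beta> j)"
        by (intro prod.cong) auto
      moreover have "(\<Prod>j<n. x j ^ \<beta> j) = x i ^ \<beta> i * (\<Prod>j\<in>{..<n}-{i}. x j ^ \<beta> j)"
        using i by (subst prod.remove[of _ i]) auto
      ultimately show "f i (\<beta>(i := \<beta> i + 1)) = [:pdf i c \<beta>:] * (\<Prod>j<n. x j ^ \<beta> j)"
        unfolding f_def by (simp add: pdf_def of_nat_poly mult_ac)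
    qed
    finally show ?thesis .
  qed
  have "pderiv (evalf n (Suc e) (\<lambda>\<alpha>. [:c \<alpha>:]) x) =
      (\<Sum>\<alpha>\<in>mons n (Suc e). \<Sum>i<n. pderiv (x i) * f i \<alpha>)"
    unfolding evalf_def pderiv_sum pderiv_monomial ..
  also have "\<dots> = (\<Sum>i<n. pderiv (x i) * (\<Sum>\<alpha>\<in>mons n (Suc e). f i \<alpha>))"
    by (subst sum.swap) (simp add: sum_distrib_left)
  also have "\<dots> = (\<Sum>i<n. pderiv (x i) * evalf n e (\<lambda>\<alpha>. [:pdf i c \<alpha>:]) x)"
    by (intro sum.cong refl) (simp add: sum_f)
  finally show ?thesis .
qed

definition index_lists :: "nat \<Rightarrow> nat \<Rightarrow> nat list set" where
  "index_lists n j = {is. length is = j \<and> set is \<subseteq> {..<n}}"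

lemma index_lists_Suc: "index_lists n (Suc j) = (\<lambda>(i, is). i # is) ` ({..<n} \<times> index_lists n j)"
  by (auto simp: index_lists_def length_Suc_conv image_iff)

lemma higher_pderiv_evalf_line:
  fixes c :: "(nat \<Rightarrow> nat) \<Rightarrow> 'a::field"
  assumes "j \<le> d"
  shows "(pderiv ^^ j) (evalf n d (\<lambda>\<alpha>. [:c \<alpha>:]) (\<lambda>i. [:P i, z i:])) =
    (\<Sum>is\<in>index_lists n j.
       evalf n (d - j) (\<lambda>\<alpha>. [:pdfs is c \<alpha>:]) (\<lambda>i. [:P i, z i:]) * [:prod_list (map z is):])"
  using assms
proof (induction j)
  case 0
  have "index_lists n 0 = {[]}" by (auto simp: index_lists_def)
  thus ?case by (simp add: pdfs_def)
next
  case (Suc j)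
  let ?X = "\<lambda>i. [:P i, z i:]"
  have dj: "d - j = Suc (d - Suc j)" using Suc.prems by simp
  have "(pderiv ^^ Suc j) (evalf n d (\<lambda>\<alpha>. [:c \<alpha>:]) ?X) =
     (\<Sum>is\<in>index_lists n j.
        pderiv (evalf n (d - j) (\<lambda>\<alpha>. [:pdfs is c \<alpha>:]) ?X) * [:prod_list (map z is):])"
    using Suc by (simp add: pderiv_sum pderiv_mult pderiv_smult)
  also have "\<dots> = (\<Sum>is\<in>index_lists n j. \<Sum>i<n.
      evalf n (d - Suc j) (\<lambda>\<alpha>. [:pdfs (i # is) c \<alpha>:]) ?X * [:prod_list (map z (i # is)):])"
    unfolding dj pderiv_evalf
    by (intro sum.cong refl) (simp add: sum_distrib_right pdfs_def pderiv_pCons mult_ac smult_sum_right)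
  also have "\<dots> = (\<Sum>(i, is)\<in>{..<n} \<times> index_lists n j.
      evalf n (d - Suc j) (\<lambda>\<alpha>. [:pdfs (i # is) c \<alpha>:]) ?X * [:prod_list (map z (i # is)):])"
    by (subst sum.swap) (simp add: sum.cartesian_product)
  also have "\<dots> = (\<Sum>is\<in>index_lists n (Suc j).
      evalf n (d - Suc j) (\<lambda>\<alpha>. [:pdfs is c \<alpha>:]) ?X * [:prod_list (map z is):])"
    unfolding index_lists_Suc by (subst sum.reindex) (auto simp: inj_on_def case_prod_unfold)
  finally show ?case .
qed

definition taylor_poly ::
  "nat \<Rightarrow> nat \<Rightarrow> ((nat \<Rightarrow> nat) \<Rightarrow> 'a::field) \<Rightarrow> (nat \<Rightarrow> 'a) \<Rightarrow> (nat \<Rightarrow> 'a) \<Rightarrow> 'a poly" where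
  "taylor_poly n d c P z = evalf n d (\<lambda>\<alpha>. [:c \<alpha>:]) (\<lambda>i. [:P i, z i:])"

lemma poly_taylor_poly: "poly (taylor_poly n d c P z) s = evalf n d c (\<lambda>i. P i + s * z i)"
  by (simp add: taylor_poly_def poly_evalf mult.commute)

lemma tform_eq_coeff_taylor_poly:
  assumes "j \<le> d"
  shows "tform n d j c P z = of_nat (fact j) * coeff (taylor_poly n d c P z) j"
proof -
  have "tform n d j c P z = poly ((pderiv ^^ j) (taylor_poly n d c P z)) 0"
    unfolding taylor_poly_def higher_pderiv_evalf_line[OF assms] tform_def index_lists_def
    by (simp add: poly_sum poly_evalf mult.commute)
  also have "\<dots> = of_nat (fact j) * coeff (taylor_poly n d c P z) j"
    by (simp add: poly_0_coeff_0 coeff_higher_pderiv pochhammer_fact flip: pochhammer_of_nat)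
  finally show ?thesis .
qed

lemma degree_taylor_poly: "degree (taylor_poly n d c P z) \<le> d"
  unfolding taylor_poly_def evalf_def
proof (rule degree_sum_le[OF finite_mons])
  fix \<alpha> assume \<alpha>: "\<alpha> \<in> mons n d"
  have "degree (\<Prod>i<n. [:P i, z i:] ^ \<alpha> i) \<le> (\<Sum>i<n. degree ([:P i, z i:] ^ \<alpha> i))"
    using degree_prod_sum_le[of "{..<n}" "\<lambda>i. [:P i, z i:] ^ \<alpha> i"] by (simp add: o_def)
  also have "\<dots> \<le> (\<Sum>i<n. \<alpha> i)"
    by (intro sum_mono order.trans[OF degree_power_le]) simp
  finally show "degree ([:c \<alpha>:] * (\<Prod>i<n. [:P i, z i:] ^ \<alpha> i)) \<le> d"
    using \<alpha> degree_smult_le[of "c \<alpha>"] by (auto simp: mons_def)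
qed

lemma poly_eqI_cofinite:
  fixes p q :: "'a::field poly"
  assumes "infinite (UNIV :: 'a set)" "finite S" "\<And>s. s \<notin> S \<Longrightarrow> poly p s = poly q s"
  shows "p = q"
proof (rule ccontr)
  assume "p \<noteq> q"
  hence "finite ({s. poly (p - q) s = 0} \<union> S)" using assms(2) poly_roots_finite[of "p - q"] by simp
  moreover have "{s. poly (p - q) s = 0} \<union> S = UNIV" using assms(3) by auto
  ultimately show False using assms(1) by (metis finite_Un)
qed

lemma taylor_poly_unique:
  fixes c :: "(nat \<Rightarrow> nat) \<Rightarrow> 'a::field"
  assumes "infinite (UNIV :: 'a set)" "finite S"
    and "\<And>s. s \<notin> S \<Longrightarrow> poly p s = evalf n d c (\<lambda>i. P i + s * z i)"
  shows "p = taylor_poly n d c P z"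
  using assms by (intro poly_eqI_cofinite[of S]) (simp_all add: poly_taylor_poly)

lemma tform_eq_0_if_vanishes_on_line:
  fixes c :: "(nat \<Rightarrow> nat) \<Rightarrow> 'a::field"
  assumes "infinite (UNIV :: 'a set)" "\<And>s. evalf n d c (\<lambda>i. P i + s * z i) = 0" "j \<le> d"
  shows "tform n d j c P z = 0"
proof -
  have "0 = taylor_poly n d c P z" using assms by (intro taylor_poly_unique[of "{}"]) auto
  thus ?thesis using assms(3) by (simp add: tform_eq_coeff_taylor_poly flip: \<open>0 = _\<close>)
qed

lemma tform_self_eq_0:
  fixes c :: "(nat \<Rightarrow> nat) \<Rightarrow> 'a::field"
  assumes "infinite (UNIV :: 'a set)" "evalf n d c P = 0" "j \<le> d"
  shows "tform n d j c P P = 0"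
proof (rule tform_eq_0_if_vanishes_on_line[OF assms(1) _ assms(3)])
  fix s
  have "(\<lambda>i. P i + s * P i) = (\<lambda>i. (1 + s) * P i)" by (simp add: algebra_simps)
  thus "evalf n d c (\<lambda>i. P i + s * P i) = 0" using assms(2) by (simp add: evalf_homog)
qed

lemma infinite_UNIV_alg_closed: "infinite (UNIV :: 'a::alg_closed_field set)"
proof
  assume fin: "finite (UNIV :: 'a set)"
  define q :: "'a poly" where "q = (\<Prod>a\<in>UNIV. [:- a, 1:])"
  have "degree q = card (UNIV :: 'a set)"
    unfolding q_def by (subst degree_prod_eq_sum_degree) auto
  hence "degree (q + 1) > 0" using fin by (simp add: degree_add_eq_left card_gt_0_iff)
  then obtain x where "poly (q + 1) x = 0" using alg_closed_imp_poly_has_root by blast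
  moreover have "poly q x = 0" unfolding q_def poly_prod
    by (rule prod_zero[OF fin]) (rule bexI[of _ x]; simp)
  ultimately show False by simp
qed

lemma of_nat_neq_0_if_CHAR_gt:
  assumes "CHAR('a::semiring_1) = 0 \<or> CHAR('a) > m" "0 < m"
  shows "(of_nat m :: 'a) \<noteq> 0"
  using assms by (auto simp: of_nat_eq_0_iff_char_dvd dest: dvd_imp_le)

section \<open>Restriction of a form to a plane\<close>

text \<open>Forms of degree \<open>d\<close> generated from monomials: closure under products and linear
  substitution then needs no reindexing of coefficient functions.\<close>
inductive is_form :: "nat \<Rightarrow> nat \<Rightarrow> ((nat \<Rightarrow> 'a::comm_ring_1) \<Rightarrow> 'a) \<Rightarrow> bool" for n d where
  monomial: "\<alpha> \<in> mons n d \<Longrightarrow> is_form n d (\<lambda>x. \<Prod>i<n. x i ^ \<alpha> i)"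
| zero: "is_form n d (\<lambda>x. 0)"
| add: "is_form n d f \<Longrightarrow> is_form n d g \<Longrightarrow> is_form n d (\<lambda>x. f x + g x)"
| smult: "is_form n d f \<Longrightarrow> is_form n d (\<lambda>x. a * f x)"

lemma is_form_cong: "is_form n d f \<Longrightarrow> (\<And>x. f x = g x) \<Longrightarrow> is_form n d g"
  by (metis ext)

lemma is_form_imp_evalf: "is_form n d f \<Longrightarrow> \<exists>c. \<forall>x. f x = evalf n d c x"
proof (induction rule: is_form.induct)
  case (monomial \<alpha>)
  have "evalf n d (\<lambda>\<beta>. if \<beta> = \<alpha> then 1 else 0) x = (\<Prod>i<n. x i ^ \<alpha> i)" for x
    using monomial by (simp add: evalf_def finite_mons if_distrib[where f = "\<lambda>c. c * _"] cong: if_cong)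
  thus ?case by metis
next
  case zero
  show ?case by (rule exI[of _ "\<lambda>_. 0"]) (simp add: evalf_def)
next
  case (add f g)
  then obtain c1 c2 where "\<forall>x. f x = evalf n d c1 x" "\<forall>x. g x = evalf n d c2 x" by blast
  thus ?case
    by (intro exI[of _ "\<lambda>\<beta>. c1 \<beta> + c2 \<beta>"]) (simp add: evalf_def distrib_right sum.distrib)
next
  case (smult f a)
  then obtain c1 where "\<forall>x. f x = evalf n d c1 x" by blast
  thus ?case
    by (intro exI[of _ "\<lambda>\<beta>. a * c1 \<beta>"]) (simp add: evalf_def sum_distrib_left mult_ac)
qed

lemma is_form_monomial_mult:
  assumes "\<alpha> \<in> mons n d1" "is_form n d2 g"
  shows "is_form n (d1 + d2) (\<lambda>x. (\<Prod>i<n. x i ^ \<alpha> i) * g x)"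
  using assms(2)
proof (induction rule: is_form.induct)
  case (monomial \<beta>)
  have "(\<lambda>i. \<alpha> i + \<beta> i) \<in> mons n (d1 + d2)"
    using assms(1) monomial by (auto simp: mons_def sum.distrib)
  from is_form.monomial[OF this] show ?case
    by (rule is_form_cong) (simp add: power_add prod.distrib)
next
  case zero show ?case by (rule is_form_cong[OF is_form.zero]) simp
next
  case (add f g) show ?case
    by (rule is_form_cong[OF is_form.add[OF add.IH]]) (simp add: distrib_left)
next
  case (smult f a) show ?case
    by (rule is_form_cong[OF is_form.smult[OF smult.IH, of a]]) (simp add: mult_ac)
qed

lemma is_form_mult:
  assumes "is_form n d1 f" "is_form n d2 g"
  shows "is_form n (d1 + d2) (\<lambda>x. f x * g x)"
  using assms(1)
proof (induction rule: is_form.induct)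
  case (monomial \<alpha>) show ?case using is_form_monomial_mult[OF monomial assms(2)] .
next
  case zero show ?case by (rule is_form_cong[OF is_form.zero]) simp
next
  case (add f1 f2) show ?case
    by (rule is_form_cong[OF is_form.add[OF add.IH]]) (simp add: distrib_right)
next
  case (smult f a) show ?case
    by (rule is_form_cong[OF is_form.smult[OF smult.IH, of a]]) (simp add: mult_ac)
qed

lemma is_form_one: "is_form n 0 (\<lambda>x. 1)"
  using is_form.monomial[of "\<lambda>_. 0" n 0] by (simp add: mons_def)

lemma is_form_power: "is_form n 1 f \<Longrightarrow> is_form n k (\<lambda>x. f x ^ k)"
  by (induction k) (use is_form_one is_form_mult[of n 1 f] in auto)

lemma is_form_sum:
  "finite S \<Longrightarrow> (\<And>s. s \<in> S \<Longrightarrow> is_form n d (f s)) \<Longrightarrow> is_form n d (\<lambda>x. \<Sum>s\<in>S. f s x)"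
  by (induction S rule: finite_induct) (auto intro: is_form.zero is_form.add)

lemma is_form_prod:
  "finite S \<Longrightarrow> (\<And>s. s \<in> S \<Longrightarrow> is_form n (e s) (f s)) \<Longrightarrow>
   is_form n (\<Sum>s\<in>S. e s) (\<lambda>x. \<Prod>s\<in>S. f s x)"
  by (induction S rule: finite_induct) (auto intro: is_form_one is_form_mult)

lemma is_form_evalf_linear:
  assumes "\<And>i. i < n \<Longrightarrow> is_form m 1 (L i)"
  shows "is_form m d (\<lambda>x. evalf n d c (\<lambda>i. L i x))"
  unfolding evalf_def
proof (rule is_form_sum[OF finite_mons])
  fix \<alpha> assume \<alpha>: "\<alpha> \<in> mons n d"
  have "is_form m (\<Sum>i<n. \<alpha> i) (\<lambda>x. \<Prod>i<n. L i x ^ \<alpha> i)"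
    using assms by (intro is_form_prod is_form_power) auto
  thus "is_form m d (\<lambda>x. c \<alpha> * (\<Prod>i<n. L i x ^ \<alpha> i))"
    using \<alpha> by (intro is_form.smult) (simp add: mons_def)
qed

lemma is_form_var: "j < n \<Longrightarrow> is_form n 1 (\<lambda>x. x j)"
  using is_form.monomial[of "\<lambda>k. if k = j then 1 else 0" n 1]
  by (simp add: mons_def if_distrib cong: if_cong)

definition plane_pt :: "(nat \<Rightarrow> 'a::comm_ring_1) \<Rightarrow> (nat \<Rightarrow> 'a) \<Rightarrow> (nat \<Rightarrow> 'a) \<Rightarrow> (nat \<Rightarrow> 'a) \<Rightarrow> nat \<Rightarrow> 'a"
  where "plane_pt A B C x = (\<lambda>i. x 0 * A i + x 1 * B i + x 2 * C i)"

lemma residual_form_exists: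
  fixes c :: "(nat \<Rightarrow> nat) \<Rightarrow> 'a::field"
  assumes "1 \<le> d" and on_line: "\<And>s t. evalf n d c (\<lambda>i. s * A i + t * B i) = 0"
  obtains h where "\<And>x. evalf n d c (plane_pt A B C x) = x 2 * evalf 3 (d - 1) h x"
proof -
  have "is_form 3 1 (\<lambda>x. plane_pt A B C x i)" for i
  proof -
    have "is_form 3 1 (\<lambda>x. A i * x 0 + B i * x 1 + C i * x 2)"
      by (intro is_form.add is_form.smult is_form_var) auto
    thus ?thesis by (rule is_form_cong) (simp add: plane_pt_def mult_ac)
  qed
  hence "is_form 3 d (\<lambda>x. evalf n d c (plane_pt A B C x))"
    using is_form_evalf_linear[of n 3 "\<lambda>i x. plane_pt A B C x i" d c] by simp
  then obtain g where g: "\<And>x. evalf n d c (plane_pt A B C x) = evalf 3 d g x"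
    using is_form_imp_evalf by blast
  show ?thesis
  proof
    fix x :: "nat \<Rightarrow> 'a"
    have "evalf 3 d g (x(2 := 0)) = 0"
      using g[of "x(2 := 0)"] on_line[of "x 0" "x 1"] by (simp add: plane_pt_def)
    moreover have "d = Suc (d - 1)" using assms(1) by simp
    ultimately show "evalf n d c (plane_pt A B C x) =
        x 2 * evalf 3 (d - 1) (\<lambda>\<beta>. g (\<beta>(2 := \<beta> 2 + 1))) x"
      using g[of x] evalf_split_var[of 2 3 "d - 1" g x] by simp
  qed
qed

lemma taylor_poly_residual:
  fixes c :: "(nat \<Rightarrow> nat) \<Rightarrow> 'a::field"
  assumes "infinite (UNIV :: 'a set)"
    and res: "\<And>x. evalf n d c (plane_pt A B C x) = x 2 * evalf 3 (d - 1) h x"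
    and "Q 2 = 0"
  shows "taylor_poly n d c (plane_pt A B C Q) (plane_pt A B C y) =
    smult (y 2) (pCons 0 (taylor_poly 3 (d - 1) h Q y))"
proof (rule sym, rule taylor_poly_unique[of "{}"])
  fix s :: 'a
  have "(\<lambda>i. plane_pt A B C Q i + s * plane_pt A B C y i) = plane_pt A B C (\<lambda>i. Q i + s * y i)"
    by (simp add: plane_pt_def fun_eq_iff algebra_simps)
  thus "poly (smult (y 2) (pCons 0 (taylor_poly 3 (d - 1) h Q y))) s =
      evalf n d c (\<lambda>i. plane_pt A B C Q i + s * plane_pt A B C y i)"
    using assms(3) by (simp add: res poly_taylor_poly mult_ac)
qed (use assms(1) in auto)

lemma tform_residual:
  fixes c :: "(nat \<Rightarrow> nat) \<Rightarrow> 'a::field"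
  assumes "infinite (UNIV :: 'a set)"
    and "\<And>x. evalf n d c (plane_pt A B C x) = x 2 * evalf 3 (d - 1) h x"
    and "Q 2 = 0" "Suc j \<le> d"
  shows "tform n d (Suc j) c (plane_pt A B C Q) (plane_pt A B C y) =
    of_nat (Suc j) * y 2 * tform 3 (d - 1) j h Q y"
proof -
  have "taylor_poly n d c (plane_pt A B C Q) (plane_pt A B C y) =
      smult (y 2) (pCons 0 (taylor_poly 3 (d - 1) h Q y))"
    by (rule taylor_poly_residual) (use assms in auto)
  thus ?thesis
    using assms(4)
    by (simp add: tform_eq_coeff_taylor_poly fact_Suc tform_eq_coeff_taylor_poly[of j "d - 1"] algebra_simps)
qed

section \<open>Tangent spaces\<close>

lemma exists_nontrivial_relation:
  fixes u :: "'b \<Rightarrow> 'c \<Rightarrow> 'a::field"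
  assumes "finite I" "finite J" "card I < card J"
  shows "\<exists>a. (\<exists>j\<in>J. a j \<noteq> 0) \<and> (\<forall>i\<in>I. (\<Sum>j\<in>J. a j * u j i) = 0)"
  using assms
proof (induction I arbitrary: J u rule: finite_induct)
  case empty
  then obtain j where "j \<in> J" by (metis card.empty card_gt_0_iff ex_in_conv)
  thus ?case by (intro exI[of _ "\<lambda>_. 1"]) auto
next
  case (insert i0 I)
  show ?case
  proof (cases "\<forall>j\<in>J. u j i0 = 0")
    case True
    from insert.IH[of J u] insert.prems insert.hyps obtain a where
      "\<exists>j\<in>J. a j \<noteq> 0" "\<forall>i\<in>I. (\<Sum>j\<in>J. a j * u j i) = 0" by auto
    with True show ?thesis by auto
  next
    case False
    then obtain j0 where j0: "j0 \<in> J" "u j0 i0 \<noteq> 0" by auto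
    define cf where "cf j = u j i0 / u j0 i0" for j
    define u' where "u' j i = u j i - cf j * u j0 i" for j i
    \<comment> \<open>Gaussian elimination: the vectors \<open>u' j\<close> vanish at \<open>i0\<close>, and one fewer of them remains.\<close>
    have "card I < card (J - {j0})" using insert.prems insert.hyps j0 by auto
    with insert.IH[of "J - {j0}" u'] insert.prems obtain a' where
      a': "\<exists>j\<in>J - {j0}. a' j \<noteq> 0" "\<forall>i\<in>I. (\<Sum>j\<in>J - {j0}. a' j * u' j i) = 0" by auto
    have a'0: "\<forall>i\<in>insert i0 I. (\<Sum>j\<in>J - {j0}. a' j * u' j i) = 0"
      using a'(2) j0 by (auto simp: u'_def cf_def)
    define a where "a j = (if j = j0 then - (\<Sum>j\<in>J - {j0}. a' j * cf j) else a' j)" for j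
    have "(\<Sum>j\<in>J. a j * u j i) = 0" if "i \<in> insert i0 I" for i
    proof -
      have "(\<Sum>j\<in>J. a j * u j i) = a j0 * u j0 i + (\<Sum>j\<in>J - {j0}. a' j * u j i)"
        using j0 insert.prems by (subst sum.remove[of _ j0]) (auto simp: a_def)
      also have "(\<Sum>j\<in>J - {j0}. a' j * u j i) =
          (\<Sum>j\<in>J - {j0}. a' j * u' j i) + (\<Sum>j\<in>J - {j0}. a' j * cf j) * u j0 i"
        by (simp add: u'_def algebra_simps sum.distrib sum_distrib_left sum_distrib_right sum_subtractf)
      finally show ?thesis using a'0 that by (auto simp: a_def)
    qed
    moreover have "\<exists>j\<in>J. a j \<noteq> 0" using a'(1) by (auto simp: a_def)
    ultimately show ?thesis by blast
  qed
qed

lemma relation_at_pivot: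
  fixes g :: "'i \<Rightarrow> 'a::field"
  assumes "finite I" "k \<in> I" "g k \<noteq> 0"
    and ker: "\<And>j. j \<in> J \<Longrightarrow> (\<Sum>i\<in>I. g i * w j i) = 0"
    and rel: "\<And>i. i \<in> I - {k} \<Longrightarrow> (\<Sum>j\<in>J. a j * w j i) = 0"
  shows "(\<Sum>j\<in>J. a j * w j k) = 0"
proof -
  have "g k * (\<Sum>j\<in>J. a j * w j k) = (\<Sum>i\<in>I. g i * (\<Sum>j\<in>J. a j * w j i))"
    using sum.remove[OF assms(1,2), of "\<lambda>i. g i * (\<Sum>j\<in>J. a j * w j i)"] rel by simp
  also have "\<dots> = (\<Sum>i\<in>I. \<Sum>j\<in>J. g i * (a j * w j i))" by (simp add: sum_distrib_left)
  also have "\<dots> = (\<Sum>j\<in>J. \<Sum>i\<in>I. g i * (a j * w j i))" by (rule sum.swap)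
  also have "\<dots> = (\<Sum>j\<in>J. a j * (\<Sum>i\<in>I. g i * w j i))" by (simp add: sum_distrib_left mult_ac)
  also have "\<dots> = 0" using ker by simp
  finally show ?thesis using assms(3) by simp
qed

lemma kernel_in_span:
  fixes g :: "nat \<Rightarrow> 'a::field"
  assumes "k < Suc m" "g k \<noteq> 0"
    and ker_u: "\<And>j. j < m \<Longrightarrow> (\<Sum>i<Suc m. g i * u j i) = 0"
    and ker_x: "(\<Sum>i<Suc m. g i * x i) = 0"
    and indep: "\<And>a. \<forall>i<Suc m. (\<Sum>j<m. a j * u j i) = 0 \<Longrightarrow> \<forall>j<m. a j = 0"
  shows "\<exists>b. \<forall>i<Suc m. x i = (\<Sum>j<m. b j * u j i)"
proof -
  define w where "w = u(m := x)"
  have "card ({..<Suc m} - {k}) < card {..<Suc m}" using assms(1) by simp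
  then obtain a where a: "\<exists>j<Suc m. a j \<noteq> 0"
    and rel': "\<forall>i\<in>{..<Suc m} - {k}. (\<Sum>j<Suc m. a j * w j i) = 0"
    using exists_nontrivial_relation[of "{..<Suc m} - {k}" "{..<Suc m}" w] by auto
  have ker_w: "(\<Sum>i<Suc m. g i * w j i) = 0" if "j \<in> {..<Suc m}" for j
    using that ker_u ker_x by (cases "j = m") (simp_all add: w_def del: sum.lessThan_Suc)
  have rel: "(\<Sum>j<Suc m. a j * w j i) = 0" if "i < Suc m" for i
  proof (cases "i = k")
    case True
    with relation_at_pivot[of "{..<Suc m}" k g "{..<Suc m}" w a] ker_w rel' assms(1,2)
    show ?thesis by (simp del: sum.lessThan_Suc)
  qed (use rel' that in \<open>simp del: sum.lessThan_Suc\<close>)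
  have rel_u: "(\<Sum>j<m. a j * u j i) + a m * x i = 0" if "i < Suc m" for i
  proof -
    have "(\<Sum>j<m. a j * w j i) = (\<Sum>j<m. a j * u j i)" by (intro sum.cong) (auto simp: w_def)
    thus ?thesis using rel[OF that] by (simp add: w_def)
  qed
  have "a m \<noteq> 0"
  proof
    assume "a m = 0"
    with rel_u have "\<forall>i<Suc m. (\<Sum>j<m. a j * u j i) = 0" by simp
    hence "\<forall>j<m. a j = 0" by (rule indep)
    with \<open>a m = 0\<close> have "\<forall>j<Suc m. a j = 0" by (simp add: less_Suc_eq)
    with a show False by blast
  qed
  have "x i = (\<Sum>j<m. (- a j / a m) * u j i)" if "i < Suc m" for i
  proof -
    have "a m * x i = - (\<Sum>j<m. a j * u j i)"
      using rel_u[OF that] by (simp add: add_eq_0_iff add.commute)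
    hence "x i = - (\<Sum>j<m. a j * u j i) / a m"
      using \<open>a m \<noteq> 0\<close> by (metis nonzero_mult_div_cancel_left)
    thus ?thesis by (simp add: sum_divide_distrib sum_negf)
  qed
  thus ?thesis by (intro exI[of _ "\<lambda>j. - a j / a m"]) blast
qed

lemma tangent_plane_in_plane:
  fixes c :: "(nat \<Rightarrow> nat) \<Rightarrow> 'a::field"
  assumes "smooth_surface d c" "evalf 4 d c P = 0" "nonzero_vec 4 P" "indep3 4 A B C"
    and "tform 4 d 1 c P A = 0" "tform 4 d 1 c P B = 0" "tform 4 d 1 c P C = 0"
    and "tform 4 d 1 c P z = 0"
  obtains y where "\<And>i. i < 4 \<Longrightarrow> z i = plane_pt A B C y i"
proof -
  define g where "g i = evalf 4 (d - 1) (pdf i c) P" for i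
  obtain k where k: "k < 4" "g k \<noteq> 0" using assms(1-3) by (auto simp: smooth_surface_def g_def)
  have ker: "(\<Sum>i<4. g i * x i) = 0" if "tform 4 d 1 c P x = 0" for x
    using that by (simp only: tform_one g_def)
  have "\<exists>b. \<forall>i<Suc 3. z i = (\<Sum>j<3. b j * ([A, B, C] ! j) i)"
  proof (rule kernel_in_span[of k 3 g])
    fix j :: nat assume "j < 3"
    hence "j = 0 \<or> j = 1 \<or> j = 2" by auto
    thus "(\<Sum>i<Suc 3. g i * ([A, B, C] ! j) i) = 0" using ker assms(5-7) by auto
  next
    fix a :: "nat \<Rightarrow> 'a" assume "\<forall>i<Suc 3. (\<Sum>j<3. a j * ([A, B, C] ! j) i) = 0"
    hence "\<forall>i<4. a 0 * A i + a 1 * B i + a 2 * C i = 0" by (simp add: eval_nat_numeral)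
    hence "a 0 = 0 \<and> a 1 = 0 \<and> a 2 = 0" using assms(4) unfolding indep3_def by blast
    thus "\<forall>j<3. a j = 0" by (simp add: eval_nat_numeral less_Suc_eq)
  qed (use k ker assms(8) in simp_all)
  then obtain b where b: "\<forall>i<Suc 3. z i = (\<Sum>j<3. b j * ([A, B, C] ! j) i)" by blast
  have "z i = plane_pt A B C b i" if "i < 4" for i
    using b that by (simp add: plane_pt_def eval_nat_numeral)
  thus ?thesis using that by blast
qed

lemma tangent_line_in_span:
  fixes h :: "(nat \<Rightarrow> nat) \<Rightarrow> 'a::field"
  assumes "tform 3 e 1 h Q w \<noteq> 0" "indep2 3 Q v"
    and "tform 3 e 1 h Q Q = 0" "tform 3 e 1 h Q v = 0" "tform 3 e 1 h Q y = 0"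
  obtains \<alpha> \<beta> where "\<And>i. i < 3 \<Longrightarrow> y i = \<alpha> * Q i + \<beta> * v i"
proof -
  define g where "g i = evalf 3 (e - 1) (pdf i h) Q" for i
  have ker: "(\<Sum>i<3. g i * x i) = 0" if "tform 3 e 1 h Q x = 0" for x
    using that by (simp only: tform_one g_def)
  have "(\<Sum>i<3. g i * w i) \<noteq> 0" using assms(1) by (simp only: tform_one g_def not_False_eq_True)
  hence "\<not> (\<forall>i\<in>{..<3}. g i * w i = 0)" using sum.neutral[of "{..<3}" "\<lambda>i. g i * w i"] by blast
  then obtain k where k: "k < 3" "g k \<noteq> 0" by auto
  have "\<exists>b. \<forall>i<Suc 2. y i = (\<Sum>j<2. b j * ([Q, v] ! j) i)"
  proof (rule kernel_in_span[of k 2 g])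
    fix j :: nat assume "j < 2"
    hence "j = 0 \<or> j = 1" by auto
    thus "(\<Sum>i<Suc 2. g i * ([Q, v] ! j) i) = 0" using ker assms(3,4) by auto
  next
    fix a :: "nat \<Rightarrow> 'a" assume "\<forall>i<Suc 2. (\<Sum>j<2. a j * ([Q, v] ! j) i) = 0"
    hence "\<forall>i<3. a 0 * Q i + a 1 * v i = 0" by (simp add: eval_nat_numeral)
    hence "a 0 = 0 \<and> a 1 = 0" using assms(2) unfolding indep2_def by blast
    thus "\<forall>j<2. a j = 0" by (simp add: eval_nat_numeral less_Suc_eq)
  qed (use k ker assms(5) in simp_all)
  then obtain b where b: "\<forall>i<Suc 2. y i = (\<Sum>j<2. b j * ([Q, v] ! j) i)" by blast
  have "y i = b 0 * Q i + b 1 * v i" if "i < 3" for i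
    using b that by (simp add: eval_nat_numeral)
  thus ?thesis using that by blast
qed

section \<open>Vanishing of the cubic form\<close>

lemma evalf_pencil:
  fixes c :: "(nat \<Rightarrow> nat) \<Rightarrow> 'a::field"
  assumes a: "1 + s * \<alpha> \<noteq> 0"
  shows "evalf n d c (\<lambda>i. P i + s * (\<alpha> * P i + \<beta> * w i)) =
    (\<Sum>k\<le>d. coeff (taylor_poly n d c P w) k * (1 + s * \<alpha>) ^ (d - k) * (s * \<beta>) ^ k)"
proof -
  define a where "a = 1 + s * \<alpha>"
  have "(\<lambda>i. P i + s * (\<alpha> * P i + \<beta> * w i)) = (\<lambda>i. a * (P i + (s * \<beta> / a) * w i))"
    using assms by (simp add: a_def fun_eq_iff field_simps)
  hence "evalf n d c (\<lambda>i. P i + s * (\<alpha> * P i + \<beta> * w i)) = a ^ d * poly (taylor_poly n d c P w) (s * \<beta> / a)"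
    by (simp add: evalf_homog poly_taylor_poly)
  also have "\<dots> = a ^ d * (\<Sum>k\<le>d. coeff (taylor_poly n d c P w) k * (s * \<beta> / a) ^ k)"
    using degree_taylor_poly[of n d c P w]
    by (simp add: poly_altdef coeff_eq_0 sum.mono_neutral_left[of "{..d}" "{..degree _}"])
  also have "\<dots> = (\<Sum>k\<le>d. coeff (taylor_poly n d c P w) k * a ^ (d - k) * (s * \<beta>) ^ k)"
    unfolding sum_distrib_left
  proof (intro sum.cong refl)
    fix k assume "k \<in> {..d}"
    hence "a ^ d = a ^ (d - k) * a ^ k" by (simp flip: power_add)
    thus "a ^ d * (coeff (taylor_poly n d c P w) k * (s * \<beta> / a) ^ k) =
        coeff (taylor_poly n d c P w) k * a ^ (d - k) * (s * \<beta>) ^ k"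
      using assms by (simp add: a_def power_divide)
  qed
  finally show ?thesis by (simp add: a_def)
qed

text \<open>By \<open>evalf_pencil\<close>, \<open>f(P + s(\<alpha>P + \<beta>w))\<close> is divisible by \<open>s\<^sup>4\<close> once the first four
  coefficients of \<open>f(P + sw)\<close> vanish.\<close>
lemma tform3_eq_0_on_pencil:
  fixes c :: "(nat \<Rightarrow> nat) \<Rightarrow> 'a::field"
  assumes inf: "infinite (UNIV :: 'a set)" and "3 \<le> d"
    and order4: "\<And>j. j \<le> 3 \<Longrightarrow> coeff (taylor_poly n d c P w) j = 0"
  shows "tform n d 3 c P (\<lambda>i. \<alpha> * P i + \<beta> * w i) = 0"
proof -
  define R where "R = (\<Sum>k\<in>{4..d}.
    smult (coeff (taylor_poly n d c P w) k * \<beta> ^ k) ([:1, \<alpha>:] ^ (d - k) * [:0, 1:] ^ (k - 4)))"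
  have "pCons 0 (pCons 0 (pCons 0 (pCons 0 R))) = taylor_poly n d c P (\<lambda>i. \<alpha> * P i + \<beta> * w i)"
  proof (rule taylor_poly_unique[OF inf, of "{s. poly [:1, \<alpha>:] s = 0}"])
    show "finite {s. poly [:1, \<alpha>:] s = 0}" by (rule poly_roots_finite) simp
  next
    fix s assume "s \<notin> {s. poly [:1, \<alpha>:] s = 0}"
    hence a: "1 + s * \<alpha> \<noteq> 0" by (simp add: mult.commute)
    have "evalf n d c (\<lambda>i. P i + s * (\<alpha> * P i + \<beta> * w i)) =
        (\<Sum>k\<in>{4..d}. coeff (taylor_poly n d c P w) k * (1 + s * \<alpha>) ^ (d - k) * (s * \<beta>) ^ k)"
      unfolding evalf_pencil[OF a] by (rule sum.mono_neutral_right) (auto simp: order4)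
    also have "\<dots> = s ^ 4 * poly R s"
      unfolding R_def poly_sum sum_distrib_left
    proof (intro sum.cong refl)
      fix k assume "k \<in> {4..d}"
      hence "s ^ k = s ^ 4 * s ^ (k - 4)" by (simp flip: power_add)
      thus "coeff (taylor_poly n d c P w) k * (1 + s * \<alpha>) ^ (d - k) * (s * \<beta>) ^ k =
          s ^ 4 * poly (smult (coeff (taylor_poly n d c P w) k * \<beta> ^ k)
            ([:1, \<alpha>:] ^ (d - k) * [:0, 1:] ^ (k - 4))) s"
        by (simp add: power_mult_distrib mult_ac)
    qed
    finally show "poly (pCons 0 (pCons 0 (pCons 0 (pCons 0 R)))) s =
        evalf n d c (\<lambda>i. P i + s * (\<alpha> * P i + \<beta> * w i))"
      by (simp add: eval_nat_numeral mult_ac)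
  qed
  thus ?thesis
    using \<open>3 \<le> d\<close> by (simp add: tform_eq_coeff_taylor_poly eval_nat_numeral flip: \<open>pCons 0 _ = _\<close>)
qed

lemma coeff_taylor_poly_residual_flex:
  fixes c :: "(nat \<Rightarrow> nat) \<Rightarrow> 'a::field"
  assumes "infinite (UNIV :: 'a set)" "3 \<le> d" "(2::'a) \<noteq> 0"
    and "\<And>x. evalf n d c (plane_pt A B C x) = x 2 * evalf 3 (d - 1) h x" "Q 2 = 0"
    and "evalf 3 (d - 1) h Q = 0" "tform 3 (d - 1) 1 h Q v = 0" "tform 3 (d - 1) 2 h Q v = 0"
    and "j \<le> 3"
  shows "coeff (taylor_poly n d c (plane_pt A B C Q) (plane_pt A B C v)) j = 0"
proof -
  have "taylor_poly n d c (plane_pt A B C Q) (plane_pt A B C v) =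
      smult (v 2) (pCons 0 (taylor_poly 3 (d - 1) h Q v))"
    by (rule taylor_poly_residual) (use assms in auto)
  moreover have "coeff (taylor_poly 3 (d - 1) h Q v) i = 0" if "i \<le> 2" for i
  proof -
    have "tform 3 (d - 1) i h Q v = 0" "(of_nat (fact i) :: 'a) \<noteq> 0"
      using that assms(3,6-8) by (auto simp: le_Suc_eq numeral_2_eq_2 tform_zero)
    thus ?thesis using that assms(2) by (simp add: tform_eq_coeff_taylor_poly)
  qed
  ultimately show ?thesis using assms(9) by (cases j) auto
qed

lemma tform3_eq_0_in_residual_plane:
  fixes c :: "(nat \<Rightarrow> nat) \<Rightarrow> 'a::field"
  assumes inf: "infinite (UNIV :: 'a set)" and "3 \<le> d" and two: "(2::'a) \<noteq> 0"
    and res: "\<And>x. evalf n d c (plane_pt A B C x) = x 2 * evalf 3 (d - 1) h x"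
    and "Q 2 = 0" and flex: "inflection_pt (d - 1) h Q"
    and smooth: "tform 3 (d - 1) 1 h Q w \<noteq> 0"
    and t2: "tform n d 2 c (plane_pt A B C Q) (plane_pt A B C y) = 0"
  shows "tform n d 3 c (plane_pt A B C Q) (plane_pt A B C y) = 0"
proof (cases "y 2 = 0")
  case True
  have "evalf n d c (\<lambda>i. plane_pt A B C Q i + s * plane_pt A B C y i) = 0" for s
  proof -
    have "(\<lambda>i. plane_pt A B C Q i + s * plane_pt A B C y i) = plane_pt A B C (\<lambda>i. Q i + s * y i)"
      by (simp add: plane_pt_def fun_eq_iff algebra_simps)
    thus ?thesis using True \<open>Q 2 = 0\<close> by (simp add: res)
  qed
  thus ?thesis using inf \<open>3 \<le> d\<close> by (intro tform_eq_0_if_vanishes_on_line) auto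
next
  case False
  from flex obtain v where hQ: "evalf 3 (d - 1) h Q = 0" and v: "indep2 3 Q v"
    "tform 3 (d - 1) 1 h Q v = 0" "tform 3 (d - 1) 2 h Q v = 0"
    unfolding inflection_pt_def by blast
  have "tform n d (Suc 1) c (plane_pt A B C Q) (plane_pt A B C y) =
      of_nat (Suc 1) * y 2 * tform 3 (d - 1) 1 h Q y"
    by (rule tform_residual) (use assms in auto)
  hence "tform 3 (d - 1) 1 h Q y = 0" using t2 False two by (simp add: numeral_2_eq_2)
  moreover have "tform 3 (d - 1) 1 h Q Q = 0" using tform_self_eq_0[OF inf hQ] \<open>3 \<le> d\<close> by simp
  ultimately obtain \<alpha> \<beta> where "\<And>i. i < 3 \<Longrightarrow> y i = \<alpha> * Q i + \<beta> * v i"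
    using tangent_line_in_span[OF smooth v(1)] v(2) by metis
  hence "plane_pt A B C y = (\<lambda>i. \<alpha> * plane_pt A B C Q i + \<beta> * plane_pt A B C v i)"
    by (simp add: plane_pt_def fun_eq_iff algebra_simps)
  moreover have "tform n d 3 c (plane_pt A B C Q) (\<lambda>i. \<alpha> * plane_pt A B C Q i + \<beta> * plane_pt A B C v i) = 0"
    using coeff_taylor_poly_residual_flex[OF inf \<open>3 \<le> d\<close> two res \<open>Q 2 = 0\<close> hQ v(2,3)]
    by (rule tform3_eq_0_on_pencil[OF inf \<open>3 \<le> d\<close>])
  ultimately show ?thesis by simp
qed

lemma tform_eq_0_along_line:
  fixes c :: "(nat \<Rightarrow> nat) \<Rightarrow> 'a::field"
  assumes "infinite (UNIV :: 'a set)" "line_on d c A B" "j \<le> d"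
    and "\<And>i. i < 4 \<Longrightarrow> y i = a * A i + b * B i"
  shows "tform 4 d j c (\<lambda>i. s0 * A i + t0 * B i) y = 0"
proof (rule tform_eq_0_if_vanishes_on_line[OF assms(1) _ assms(3)])
  fix s
  have "evalf 4 d c (\<lambda>i. s0 * A i + t0 * B i + s * y i) =
      evalf 4 d c (\<lambda>i. (s0 + s * a) * A i + (t0 + s * b) * B i)"
    by (rule evalf_cong) (simp add: assms(4) algebra_simps)
  thus "evalf 4 d c (\<lambda>i. s0 * A i + t0 * B i + s * y i) = 0"
    using assms(2) by (simp add: line_on_def)
qed

lemma nonzero_vec_on_line:
  assumes "indep2 n A B" "(s, t) \<noteq> (0, 0)"
  shows "nonzero_vec n (\<lambda>i. s * A i + t * B i)"
proof (rule ccontr)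
  assume "\<not> nonzero_vec n (\<lambda>i. s * A i + t * B i)"
  hence "\<forall>i<n. s * A i + t * B i = 0" by (simp add: nonzero_vec_def)
  with assms show False unfolding indep2_def by blast
qed

lemma indep3_if_tform_neq_0:
  fixes c :: "(nat \<Rightarrow> nat) \<Rightarrow> 'a::field"
  assumes inf: "infinite (UNIV :: 'a set)" and line: "line_on d c A B" and "j \<le> d"
    and tj: "tform 4 d j c (\<lambda>i. s0 * A i + t0 * B i) C \<noteq> 0"
  shows "indep3 4 A B C"
  unfolding indep3_def
proof (intro allI impI)
  fix a b e assume rel: "\<forall>i<4. a * A i + b * B i + e * C i = 0"
  have "e = 0"
  proof (rule ccontr)
    assume "e \<noteq> 0"
    have "C i = (- a / e) * A i + (- b / e) * B i" if "i < 4" for i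
    proof -
      have "(a * A i + b * B i) + e * C i = 0" using rel that by blast
      hence "e * C i = - (a * A i + b * B i)" by (metis add.commute eq_neg_iff_add_eq_0)
      hence "C i = inverse e * - (a * A i + b * B i)" using \<open>e \<noteq> 0\<close> by (simp add: field_simps)
      thus ?thesis by (simp add: divide_inverse algebra_simps)
    qed
    hence "tform 4 d j c (\<lambda>i. s0 * A i + t0 * B i) C = 0"
      by (intro tform_eq_0_along_line[OF inf line \<open>j \<le> d\<close>, where a = "- a / e" and b = "- b / e"])
    with tj show False by contradiction
  qed
  with rel have "\<forall>i<4. a * A i + b * B i = 0" by simp
  with line \<open>e = 0\<close> show "a = 0 \<and> b = 0 \<and> e = 0" unfolding line_on_def indep2_def by blast
qed

lemma residual_flex_at_point:
  fixes c :: "(nat \<Rightarrow> nat) \<Rightarrow> 'a::field"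
  assumes inf: "infinite (UNIV :: 'a set)" and "3 \<le> d"
    and line: "line_on d c A B" and second: "second_kind d c A B" and "(s0, t0) \<noteq> (0, 0)"
    and t1: "tform 4 d 1 c (\<lambda>i. s0 * A i + t0 * B i) C = 0"
    and t2: "tform 4 d 2 c (\<lambda>i. s0 * A i + t0 * B i) C \<noteq> 0"
  obtains h Q where "indep3 4 A B C"
    and "\<And>x. evalf 4 d c (plane_pt A B C x) = x 2 * evalf 3 (d - 1) h x"
    and "(\<lambda>i. s0 * A i + t0 * B i) = plane_pt A B C Q" "Q 2 = 0"
    and "inflection_pt (d - 1) h Q" "tform 3 (d - 1) 1 h Q (\<lambda>i. if i = 2 then 1 else 0) \<noteq> 0"
proof -
  have indep: "indep3 4 A B C" using indep3_if_tform_neq_0[OF inf line _ t2] \<open>3 \<le> d\<close> by simp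
  have on_line: "\<And>s t. evalf 4 d c (\<lambda>i. s * A i + t * B i) = 0" using line by (simp add: line_on_def)
  obtain h where res: "\<And>x. evalf 4 d c (plane_pt A B C x) = x 2 * evalf 3 (d - 1) h x"
  proof (rule residual_form_exists[OF _ on_line])
    fix h assume "\<And>x. evalf 4 d c (plane_pt A B C x) = x 2 * evalf 3 (d - 1) h x"
    thus thesis by (rule that)
  qed (use \<open>3 \<le> d\<close> in simp)
  \<comment> \<open>\<open>Q\<close> and \<open>e2\<close> are \<open>P\<close> and \<open>C\<close> in the plane coordinates.\<close>
  define Q :: "nat \<Rightarrow> 'a" where "Q i = (if i = 0 then s0 else if i = 1 then t0 else 0)" for i
  define e2 :: "nat \<Rightarrow> 'a" where "e2 = (\<lambda>i. if i = 2 then 1 else 0)"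
  have P: "(\<lambda>i. s0 * A i + t0 * B i) = plane_pt A B C Q" by (simp add: plane_pt_def Q_def)
  have residual: "tform 4 d (Suc j) c (plane_pt A B C Q) C = of_nat (Suc j) * tform 3 (d - 1) j h Q e2"
    if "j \<le> 2" for j
  proof -
    have "tform 4 d (Suc j) c (plane_pt A B C Q) (plane_pt A B C e2) =
        of_nat (Suc j) * e2 2 * tform 3 (d - 1) j h Q e2"
      by (rule tform_residual) (use inf res that \<open>3 \<le> d\<close> in \<open>auto simp: Q_def\<close>)
    moreover have "plane_pt A B C e2 = C" by (simp add: plane_pt_def e2_def)
    ultimately show ?thesis by (simp add: e2_def)
  qed
  have "evalf 3 (d - 1) h Q = 0" using residual[of 0] t1 P by (simp add: tform_zero)
  moreover have "nonzero_vec 3 Q" using \<open>(s0, t0) \<noteq> (0, 0)\<close> by (auto simp: nonzero_vec_def Q_def)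
  ultimately have "inflection_pt (d - 1) h Q"
    using second[unfolded second_kind_def, rule_format, of C h Q] indep res
    by (simp add: Q_def plane_pt_def)
  moreover have "tform 3 (d - 1) 1 h Q e2 \<noteq> 0"
    using residual[of 1] t2 P by (simp add: numeral_2_eq_2)
  ultimately show ?thesis
    using that[OF indep res P] by (simp add: Q_def flip: e2_def)
qed

theorem lemma2p7:
  fixes d :: nat and c :: "(nat \<Rightarrow> nat) \<Rightarrow> 'a::alg_closed_field"
    and A B P :: "nat \<Rightarrow> 'a" and s0 t0 :: 'a
  assumes "d \<ge> 3"
    and "CHAR('a) = 0 \<or> CHAR('a) > d"
    and "smooth_surface d c"
    and "line_on d c A B"
    and "(s0, t0) \<noteq> (0, 0)" and "P = (\<lambda>i. s0 * A i + t0 * B i)"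
    and "\<exists>z. tform 4 d 1 c P z = 0 \<and> tform 4 d 2 c P z \<noteq> 0"
    and "second_kind d c A B"
  shows "\<forall>z. tform 4 d 1 c P z = 0 \<and> tform 4 d 2 c P z = 0 \<longrightarrow> tform 4 d 3 c P z = 0"
proof (intro allI impI)
  fix z assume z: "tform 4 d 1 c P z = 0 \<and> tform 4 d 2 c P z = 0"
  have inf: "infinite (UNIV :: 'a set)" by (rule infinite_UNIV_alg_closed)
  have two: "(2::'a) \<noteq> 0" using of_nat_neq_0_if_CHAR_gt[of 2] assms(1,2) by auto
  obtain C where C: "tform 4 d 1 c P C = 0" "tform 4 d 2 c P C \<noteq> 0" using assms(7) by blast
  obtain h Q where indep: "indep3 4 A B C"
    and res: "\<And>x. evalf 4 d c (plane_pt A B C x) = x 2 * evalf 3 (d - 1) h x"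
    and PQ: "P = plane_pt A B C Q" and "Q 2 = 0" "inflection_pt (d - 1) h Q"
    and smooth: "tform 3 (d - 1) 1 h Q (\<lambda>i. if i = 2 then 1 else 0) \<noteq> 0"
    using C unfolding assms(6) by (rule residual_flex_at_point[OF inf assms(1,4,8,5)]) blast
  have "tform 4 d 1 c P y = 0" if "\<And>i. i < 4 \<Longrightarrow> y i = a * A i + b * B i" for y a b
    unfolding assms(6) by (rule tform_eq_0_along_line[OF inf assms(4)]) (use assms(1) that in auto)
  hence "tform 4 d 1 c P A = 0" "tform 4 d 1 c P B = 0" by (metis mult_1 mult_zero_left add_0 add_0_right)+
  moreover have "evalf 4 d c P = 0" "nonzero_vec 4 P"
    using assms(4-6) nonzero_vec_on_line[of 4 A B s0 t0] by (simp_all add: line_on_def)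
  ultimately obtain y where "\<And>i. i < 4 \<Longrightarrow> z i = plane_pt A B C y i"
    using tangent_plane_in_plane[OF assms(3) _ _ indep _ _ C(1) conjunct1[OF z]] by blast
  hence "tform 4 d j c P z = tform 4 d j c P (plane_pt A B C y)" for j by (intro tform_cong) simp
  thus "tform 4 d 3 c P z = 0"
    using tform3_eq_0_in_residual_plane[OF inf assms(1) two res \<open>Q 2 = 0\<close> \<open>inflection_pt _ h Q\<close> smooth]
      z PQ by simp
qed

end
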